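(* Let $w\ge 2$ and let $(C_1,C_2)$ be an equitable $2$-partition of $J(n,w)$ whose quotient matrix $\begin{pmatrix} a & b\\ c& d\end{pmatrix}$ has $\lambda_2(n,w)=(w-2)(n-w-2)-2$ as an eigenvalue, with the cells ordered so that $b\ge c$. Then the quotient matrix equals $\begin{pmatrix} w(n-w)-b & b\\ 2n-2-b & w(n-w)-2n+2+b\end{pmatrix}$ for some $b\in\{n-1,n,\dots,2n-1\}$.
   Context: The Johnson graph $J(n,w)$ has as vertices the binary vectors of length $n$ with exactly $w$ ones; two vertices are adjacent iff they have exactly $w-1$ common ones; it is regular of degree $w(n-w)$. A $2$-partition $(C_1,C_2)$ of the vertex set into nonempty cells is equitable with quotient matrix $S=(s_{ij})$ if every vertex of $C_i$ has exactly $s_{ij}$ neighbours in $C_j$. The paper adopts the convention that cells are ordered so that $s_{12}\ge s_{21}$. *)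

theory Defs
  imports "Jordan_Normal_Form.Char_Poly"
begin

text \<open>Vertices of the Johnson graph J(n,w): binary vectors of length n with exactly
  w ones, identified with their supports, i.e. the w-subsets of {0..<n}.\<close>
definition johnson_vertices :: "nat \<Rightarrow> nat \<Rightarrow> nat set set" where
  "johnson_vertices n w = {A. A \<subseteq> {..<n} \<and> card A = w}"

definition johnson_adj :: "nat \<Rightarrow> nat set \<Rightarrow> nat set \<Rightarrow> bool" where
  "johnson_adj w A B = (card (A \<inter> B) = w - 1)"

definition johnson_nbrs_in :: "nat \<Rightarrow> nat set \<Rightarrow> nat set set \<Rightarrow> nat" where
  "johnson_nbrs_in w x C = card {y \<in> C. johnson_adj w x y}"

definition equitable_2partition ::
  "nat \<Rightarrow> nat \<Rightarrow> nat set set \<Rightarrow> nat set set \<Rightarrow> nat \<Rightarrow> nat \<Rightarrow> nat \<Rightarrow> nat \<Rightarrow> bool" where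
  "equitable_2partition n w C1 C2 a b c d \<longleftrightarrow>
     C1 \<noteq> {} \<and> C2 \<noteq> {} \<and> C1 \<inter> C2 = {} \<and> C1 \<union> C2 = johnson_vertices n w \<and>
     (\<forall>x\<in>C1. johnson_nbrs_in w x C1 = a \<and> johnson_nbrs_in w x C2 = b) \<and>
     (\<forall>x\<in>C2. johnson_nbrs_in w x C1 = c \<and> johnson_nbrs_in w x C2 = d)"

definition quotient_mat :: "nat \<Rightarrow> nat \<Rightarrow> nat \<Rightarrow> nat \<Rightarrow> real mat" where
  "quotient_mat a b c d = mat_of_rows_list 2 [[real a, real b], [real c, real d]]"

definition lambda2 :: "nat \<Rightarrow> nat \<Rightarrow> int" where
  "lambda2 n w = (int w - 2) * (int n - int w - 2) - 2"

end

theory Submission imports Defs begin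

text \<open>Every vertex of J(n,w) has w(n-w) neighbours, so the quotient matrix of an equitable
  2-partition has constant row sums k = w(n-w). A 2x2 matrix with constant row sums k has the
  eigenvalues k and a - c = k - b - c. Since lambda2(n,w) = k - 2n + 2 differs from k
  (as n \<ge> w \<ge> 2), it must equal k - b - c, i.e. b + c = 2n - 2; together with b \<ge> c this
  gives n - 1 \<le> b \<le> 2n - 2.\<close>

lemma johnson_neighbours_eq_swaps:
  assumes x: "x \<subseteq> {..<n}" "card x = w" and "w \<ge> 1"
  shows "{y \<in> johnson_vertices n w. johnson_adj w x y}
       = (\<lambda>(i, j). insert j (x - {i})) ` (x \<times> ({..<n} - x))"
proof (intro equalityI subsetI)
  fix y assume "y \<in> {y \<in> johnson_vertices n w. johnson_adj w x y}"
  hence y: "y \<subseteq> {..<n}" "card y = w" "card (x \<inter> y) = w - 1"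
    by (auto simp: johnson_vertices_def johnson_adj_def)
  have fin: "finite x" "finite y" using x y finite_subset by auto
  have "card (x - y) = 1"
    using y fin x assms(3) by (simp add: card_Diff_subset_Int)
  then obtain i where i: "x - y = {i}" by (auto simp: card_Suc_eq)
  have "card (y - x) = 1"
    using y fin x assms(3) by (simp add: card_Diff_subset_Int Int_commute)
  then obtain j where j: "y - x = {j}" by (auto simp: card_Suc_eq)
  have "y = insert j (x - {i})" using i j by blast
  moreover have "(i, j) \<in> x \<times> ({..<n} - x)" using i j y by auto
  ultimately show "y \<in> (\<lambda>(i, j). insert j (x - {i})) ` (x \<times> ({..<n} - x))" by force
next
  fix y assume "y \<in> (\<lambda>(i, j). insert j (x - {i})) ` (x \<times> ({..<n} - x))"
  then obtain i j where ij: "i \<in> x" "j < n" "j \<notin> x" and y: "y = insert j (x - {i})"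
    by auto
  have "finite x" using x finite_subset by auto
  moreover have "x \<inter> y = x - {i}" using ij y by auto
  ultimately show "y \<in> {y \<in> johnson_vertices n w. johnson_adj w x y}"
    using ij y x assms(3) by (auto simp: johnson_vertices_def johnson_adj_def card_insert_if)
qed

lemma inj_on_swaps:
  "inj_on (\<lambda>(i, j). insert j (x - {i})) (x \<times> (A - x))"
proof (rule inj_onI, clarsimp)
  fix i j i' j'
  assume ij: "i \<in> x" "j \<notin> x" "i' \<in> x" "j' \<notin> x"
    and e: "insert j (x - {i}) = insert j' (x - {i'})"
  have "j = j'" using e ij by blast
  moreover have "i = i'"
  proof (rule ccontr)
    assume "i \<noteq> i'"
    then have "i' \<in> insert j (x - {i})" using ij by blast
    then show False using e ij by auto
  qed
  ultimately show "i = i' \<and> j = j'" by simp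
qed

lemma card_johnson_neighbours:
  assumes x: "x \<subseteq> {..<n}" "card x = w" and "w \<ge> 1"
  shows "card {y \<in> johnson_vertices n w. johnson_adj w x y} = w * (n - w)"
proof -
  have "finite x" using x(1) finite_subset by blast
  then have "card (x \<times> ({..<n} - x)) = w * (n - w)"
    using x by (simp add: card_cartesian_product card_Diff_subset)
  then show ?thesis
    by (simp add: johnson_neighbours_eq_swaps[OF assms] card_image[OF inj_on_swaps])
qed

lemma finite_johnson_vertices: "finite (johnson_vertices n w)"
  unfolding johnson_vertices_def by (rule finite_subset[of _ "Pow {..<n}"]) auto

lemma johnson_nbrs_in_partition:
  assumes "C1 \<union> C2 = johnson_vertices n w" "C1 \<inter> C2 = {}"
  shows "johnson_nbrs_in w x C1 + johnson_nbrs_in w x C2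
       = card {y \<in> johnson_vertices n w. johnson_adj w x y}"
proof -
  have "finite C1" "finite C2"
    using finite_johnson_vertices assms(1) by (metis finite_Un)+
  moreover have "{y \<in> johnson_vertices n w. johnson_adj w x y}
      = {y \<in> C1. johnson_adj w x y} \<union> {y \<in> C2. johnson_adj w x y}"
    using assms(1) by auto
  ultimately show ?thesis
    unfolding johnson_nbrs_in_def using assms(2)
    by (simp add: card_Un_disjoint[symmetric] disjoint_iff)
qed

lemma equitable_2partition_row_sums:
  assumes "equitable_2partition n w C1 C2 a b c d" and "w \<ge> 1"
  shows "a + b = w * (n - w)" and "c + d = w * (n - w)" and "w \<le> n"
proof -
  note eq = assms(1)[unfolded equitable_2partition_def]
  obtain x1 x2 where x1: "x1 \<in> C1" and x2: "x2 \<in> C2" using eq by auto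
  then have v1: "x1 \<subseteq> {..<n}" "card x1 = w" and v2: "x2 \<subseteq> {..<n}" "card x2 = w"
    using eq by (auto simp: johnson_vertices_def)
  show "a + b = w * (n - w)"
    using card_johnson_neighbours[OF v1 assms(2)] johnson_nbrs_in_partition[of C1 C2 n w x1]
      x1 eq by auto
  show "c + d = w * (n - w)"
    using card_johnson_neighbours[OF v2 assms(2)] johnson_nbrs_in_partition[of C1 C2 n w x2]
      x2 eq by auto
  show "w \<le> n" using v1 card_mono[of "{..<n}" x1] by auto
qed

lemma quotient_mat_eigenvector:
  assumes "eigenvalue (quotient_mat a b c d) l"
  obtains v0 v1 where "v0 \<noteq> 0 \<or> v1 \<noteq> 0"
    and "real a * v0 + real b * v1 = l * v0" and "real c * v0 + real d * v1 = l * v1"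
proof -
  have "dim_row (quotient_mat a b c d) = 2"
    by (simp add: quotient_mat_def mat_of_rows_list_def)
  then obtain v where v: "v \<in> carrier_vec 2" "v \<noteq> 0\<^sub>v 2"
    "quotient_mat a b c d *\<^sub>v v = l \<cdot>\<^sub>v v"
    using assms unfolding eigenvalue_def eigenvector_def by metis
  have nonzero: "v $ 0 \<noteq> 0 \<or> v $ 1 \<noteq> 0"
  proof (rule ccontr)
    assume "\<not> ?thesis"
    then have "v = 0\<^sub>v 2" using v(1) by (intro eq_vecI) (auto simp: less_2_cases_iff)
    then show False using v(2) by simp
  qed
  have coord: "(quotient_mat a b c d *\<^sub>v v) $ i = (l \<cdot>\<^sub>v v) $ i" if "i < 2" for i
    using v(1,3) that by simp
  have "real a * v $ 0 + real b * v $ 1 = l * v $ 0"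
    and "real c * v $ 0 + real d * v $ 1 = l * v $ 1"
    using v(1) coord[of 0] coord[of 1]
    by (simp_all add: quotient_mat_def mat_of_rows_list_def mult_mat_vec_def
        scalar_prod_def row_def numeral_2_eq_2)
  with nonzero show ?thesis by (rule that)
qed

lemma eigenvalue_quotient_mat_const_row_sums:
  assumes "eigenvalue (quotient_mat a b c d) l" and "a + b = k" and "c + d = k"
  shows "l = real k \<or> l = real a - real c"
proof -
  obtain v0 v1 where v: "v0 \<noteq> 0 \<or> v1 \<noteq> 0"
    "real a * v0 + real b * v1 = l * v0" "real c * v0 + real d * v1 = l * v1"
    using quotient_mat_eigenvector[OF assms(1)] by blast
  have rows: "real b = real k - real a" "real d = real k - real c"
    using assms(2,3) by auto
  show ?thesis
  proof (cases "v0 = v1")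
    case True
    then have "real k * v0 = l * v0" "v0 \<noteq> 0" using v rows by (auto simp: algebra_simps)
    then show ?thesis by simp
  next
    case False
    have "(real a - real c - l) * (v0 - v1) = 0"
      using v(2,3) unfolding rows by (simp add: algebra_simps)
    then show ?thesis using False by simp
  qed
qed

theorem proposition1:
  fixes n w :: nat and C1 C2 :: "nat set set" and a b c d :: nat
  assumes "w \<ge> 2"
    and "equitable_2partition n w C1 C2 a b c d"
    and "eigenvalue (quotient_mat a b c d) (real_of_int (lambda2 n w))"
    and "b \<ge> c"
  shows "int a = int w * (int n - int w) - int b
       \<and> int c = 2 * int n - 2 - int b
       \<and> int d = int w * (int n - int w) - 2 * int n + 2 + int b
       \<and> n - 1 \<le> b \<and> b \<le> 2 * n - 1"
proof -
  have w: "w \<ge> 1" using assms(1) by simp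
  note row_sums = equitable_2partition_row_sums[OF assms(2) w]
  have k: "int (w * (n - w)) = int w * (int n - int w)"
    using row_sums(3) by (simp add: of_nat_diff)
  have lambda2: "lambda2 n w = int w * (int n - int w) - 2 * int n + 2"
    unfolding lambda2_def by (simp add: algebra_simps)
  have "real_of_int (lambda2 n w) \<noteq> real (w * (n - w))"
    using k row_sums(3) assms(1) unfolding lambda2 by linarith
  then have "real_of_int (lambda2 n w) = real a - real c"
    using eigenvalue_quotient_mat_const_row_sums[OF assms(3) row_sums(1,2)] by blast
  then have "int a - int c = int w * (int n - int w) - 2 * int n + 2"
    unfolding lambda2 by linarith
  then show ?thesis using row_sums(1,2) k assms(4) by linarith
qed

end
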